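(* Let $\sigma < -2$ and $p > -1-\sigma$ be such that $a := \frac{\sigma+2}{1-p} = \frac12$, and let $c_a = \big(a(1-a)\big)^{1/(p-1)}$ and $u_a(x) = c_a x^a$. Then there is a positive solution $u \in C^2(0,+\infty)$ of $u''(x) + x^\sigma u(x)^p = 0$ for $x>0$ such that $u - u_a$ changes sign infinitely many times near $x=0$, $u/u_a$ is bounded on $(0,+\infty)$, and $u(x)/u_a(x)$ does not converge as $x \searrow 0$.
   Context: The function $u_a$ is itself a positive solution of the same equation on $(0,+\infty)$. *)

theory Defs
  imports "HOL-Analysis.Analysis"
begin

definition exp_a :: "real \<Rightarrow> real \<Rightarrow> real" where
  "exp_a \<sigma> p = (\<sigma> + 2) / (1 - p)"

definition const_a :: "real \<Rightarrow> real \<Rightarrow> real" where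
  "const_a \<sigma> p = (exp_a \<sigma> p * (1 - exp_a \<sigma> p)) powr (1 / (p - 1))"

definition u_sing :: "real \<Rightarrow> real \<Rightarrow> real \<Rightarrow> real" where
  "u_sing \<sigma> p x = const_a \<sigma> p * x powr (exp_a \<sigma> p)"

definition sign_changes_inf_near_0 :: "(real \<Rightarrow> real) \<Rightarrow> bool" where
  "sign_changes_inf_near_0 f \<longleftrightarrow>
     (\<forall>\<epsilon>>0. (\<exists>x. 0 < x \<and> x < \<epsilon> \<and> f x > 0) \<and> (\<exists>y. 0 < y \<and> y < \<epsilon> \<and> f y < 0))"

end

theory Submission
  imports Defs
begin

(* Put u(x) = c_a sqrt x w(ln x). For a = 1/2 the equation u'' + x^sigma u^p = 0 becomes the
   autonomous equation w'' = F(w) with F(w) = (w - w^p)/4: the first-order term (1 - 2a) w' of the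
   general Emden-Fowler transformation vanishes, and u_a is the equilibrium w = 1. The energy
   G(w) = int_(1/2)^w F vanishes at 1/2 and at some beta > 1 and is positive in between, so the
   level set w'^2 = 2 G(w) is a closed orbit, traversed by a periodic solution w oscillating
   between 1/2 and beta. Then u/u_a = w(ln x) keeps oscillating between 1/2 and beta as x -> 0.

   The periodic solution is obtained without ODE existence theory: parametrize the orbit by an
   angle, w = alpha + (beta - alpha)(1 - cos theta)/2, and recover time as the integral of
   dt/dtheta. Because G is comparable to (w - alpha)(beta - w), dt/dtheta is bounded above and
   below, so time is a bi-Lipschitz function of the angle and can be inverted. *)

lemma DERIV_ge_imp_increment_ge:
  fixes G F :: "real \<Rightarrow> real"
  assumes "a \<le> b"
    and "\<And>x. a \<le> x \<Longrightarrow> x \<le> b \<Longrightarrow> (G has_real_derivative F x) (at x)"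
    and "\<And>x. a \<le> x \<Longrightarrow> x \<le> b \<Longrightarrow> k \<le> F x"
  shows "k * (b - a) \<le> G b - G a"
proof -
  have "G a - k * a \<le> G b - k * b"
    by (rule DERIV_nonneg_imp_nondecreasing[OF \<open>a \<le> b\<close>])
      (use assms in \<open>force intro!: derivative_eq_intros\<close>)
  then show ?thesis by (simp add: algebra_simps)
qed

lemma DERIV_le_imp_increment_le:
  fixes G F :: "real \<Rightarrow> real"
  assumes "a \<le> b"
    and "\<And>x. a \<le> x \<Longrightarrow> x \<le> b \<Longrightarrow> (G has_real_derivative F x) (at x)"
    and "\<And>x. a \<le> x \<Longrightarrow> x \<le> b \<Longrightarrow> F x \<le> k"
  shows "G b - G a \<le> k * (b - a)"
proof -
  have "k * a - G a \<le> k * b - G b"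
    by (rule DERIV_nonneg_imp_nondecreasing[OF \<open>a \<le> b\<close>])
      (use assms in \<open>force intro!: derivative_eq_intros\<close>)
  then show ?thesis by (simp add: algebra_simps)
qed

lemma DERIV_from_punctured_nbhd:
  fixes f f' :: "real \<Rightarrow> real"
  assumes "isCont f x" "isCont f' x" "0 < d"
    and "\<And>z. z \<noteq> x \<Longrightarrow> \<bar>z - x\<bar> < d \<Longrightarrow> (f has_real_derivative f' z) (at z)"
  shows "(f has_real_derivative f' x) (at x)"
proof -
  have near: "eventually (\<lambda>z. z \<noteq> x \<and> \<bar>z - x\<bar> < d) (at x)"
    using \<open>0 < d\<close> by (auto simp: eventually_at dist_real_def intro!: exI[of _ d])
  have "((\<lambda>z. (f z - f x) / (z - x)) \<longlongrightarrow> f' x) (at x)"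
  proof (rule lhopital[where f' = f' and g' = "\<lambda>_. 1"])
    show "((\<lambda>z. f z - f x) \<longlongrightarrow> 0) (at x)"
      using \<open>isCont f x\<close> by (simp add: isCont_def LIM_zero)
    show "((\<lambda>z. z - x) \<longlongrightarrow> 0) (at x)"
      by (intro tendsto_eq_intros) auto
    show "\<forall>\<^sub>F z in at x. z - x \<noteq> 0"
      using near by (rule eventually_mono) auto
    show "\<forall>\<^sub>F z in at x. ((\<lambda>z. f z - f x) has_real_derivative f' z) (at z)"
      using near by (rule eventually_mono) (auto intro!: derivative_eq_intros assms(4))
    show "\<forall>\<^sub>F z in at x. ((\<lambda>z. z - x) has_real_derivative 1) (at z)"
      by (intro always_eventually allI) (auto intro!: derivative_eq_intros)
    show "((\<lambda>z. f' z / 1) \<longlongrightarrow> f' x) (at x)"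
      using \<open>isCont f' x\<close> by (simp add: isCont_def)
  qed simp
  then show ?thesis by (simp add: has_field_derivative_iff)
qed

section \<open>Periodic orbits in a potential well\<close>

locale energy_well =
  fixes G F :: "real \<Rightarrow> real" and \<alpha> \<beta> m1 m2 :: real
  assumes well_nonempty: "\<alpha> < \<beta>"
    and G_deriv: "\<And>x. \<alpha> \<le> x \<Longrightarrow> x \<le> \<beta> \<Longrightarrow> (G has_real_derivative F x) (at x)"
    and F_cont: "continuous_on {\<alpha>..\<beta>} F"
    and m1_pos: "0 < m1"
    and G_bounds: "\<And>x. \<alpha> \<le> x \<Longrightarrow> x \<le> \<beta> \<Longrightarrow>
       m1 * ((x - \<alpha>) * (\<beta> - x)) \<le> G x \<and> G x \<le> m2 * ((x - \<alpha>) * (\<beta> - x))"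
begin

definition orbit_pos :: "real \<Rightarrow> real" where
  "orbit_pos \<theta> = \<alpha> + (\<beta> - \<alpha>) * (1 - cos \<theta>) / 2"

lemma orbit_pos_bounds: "\<alpha> \<le> orbit_pos \<theta>" "orbit_pos \<theta> \<le> \<beta>"
proof -
  have "(\<beta> - \<alpha>) * (1 - cos \<theta>) \<le> (\<beta> - \<alpha>) * 2"
    using well_nonempty cos_ge_minus_one[of \<theta>] by (intro mult_left_mono) auto
  moreover have "0 \<le> (\<beta> - \<alpha>) * (1 - cos \<theta>)"
    using well_nonempty cos_le_one[of \<theta>] by (intro mult_nonneg_nonneg) auto
  ultimately show "\<alpha> \<le> orbit_pos \<theta>" "orbit_pos \<theta> \<le> \<beta>" by (auto simp: orbit_pos_def)
qed

lemma orbit_pos_gap_product: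
  "(orbit_pos \<theta> - \<alpha>) * (\<beta> - orbit_pos \<theta>) = ((\<beta> - \<alpha>) / 2)^2 * (sin \<theta>)^2"
proof -
  have "orbit_pos \<theta> - \<alpha> = (\<beta> - \<alpha>) / 2 * (1 - cos \<theta>)"
    and "\<beta> - orbit_pos \<theta> = (\<beta> - \<alpha>) / 2 * (1 + cos \<theta>)"
    and "(sin \<theta>)^2 = 1 - (cos \<theta>)^2"
    by (simp_all add: orbit_pos_def field_simps sin_squared_eq)
  then show ?thesis by (simp only:) (simp add: power2_eq_square algebra_simps)
qed

lemma orbit_pos_interior:
  assumes "sin \<theta> \<noteq> 0" shows "\<alpha> < orbit_pos \<theta>" "orbit_pos \<theta> < \<beta>"
proof -
  have "(orbit_pos \<theta> - \<alpha>) * (\<beta> - orbit_pos \<theta>) > 0"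
    using assms well_nonempty by (simp add: orbit_pos_gap_product)
  then show "\<alpha> < orbit_pos \<theta>" "orbit_pos \<theta> < \<beta>"
    using orbit_pos_bounds[of \<theta>] by (auto simp: zero_less_mult_iff)
qed

lemma orbit_pos_deriv: "(orbit_pos has_real_derivative (\<beta> - \<alpha>) * sin \<theta> / 2) (at \<theta>)"
  unfolding orbit_pos_def by (auto intro!: derivative_eq_intros)

lemma isCont_orbit_pos: "isCont orbit_pos \<theta>"
  using orbit_pos_deriv by (rule DERIV_isCont)

lemma m1_le_m2: "m1 \<le> m2"
proof -
  define x where "x = (\<alpha> + \<beta>) / 2"
  have x: "\<alpha> \<le> x" "x \<le> \<beta>" using well_nonempty by (simp_all add: x_def)
  have "0 < (x - \<alpha>) * (\<beta> - x)" using well_nonempty by (simp add: x_def)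
  moreover have "m1 * ((x - \<alpha>) * (\<beta> - x)) \<le> m2 * ((x - \<alpha>) * (\<beta> - x))"
    using G_bounds[OF x] by linarith
  ultimately show ?thesis by (meson mult_right_le_imp_le)
qed

lemma G_pos: "\<alpha> < x \<Longrightarrow> x < \<beta> \<Longrightarrow> 0 < G x"
  using G_bounds[of x] m1_pos by (smt (verit) mult_pos_pos)

lemma G_orbit_nonneg: "0 \<le> G (orbit_pos \<theta>)"
  using G_bounds[OF orbit_pos_bounds, of \<theta>] orbit_pos_bounds[of \<theta>] m1_pos
  by (smt (verit) mult_nonneg_nonneg)

lemma G_orbit_turning: "sin \<theta> = 0 \<Longrightarrow> G (orbit_pos \<theta>) = 0"
  using G_bounds[OF orbit_pos_bounds, of \<theta>] orbit_pos_gap_product[of \<theta>] by simp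

lemma isCont_G_orbit: "isCont (\<lambda>\<theta>. G (orbit_pos \<theta>)) \<theta>"
  using DERIV_isCont[OF G_deriv[OF orbit_pos_bounds]] isCont_orbit_pos
  by (rule isCont_o2[rotated])

definition dens_lo :: real where "dens_lo = sqrt (1 / (2 * m2))"
definition dens_hi :: real where "dens_hi = sqrt (1 / (2 * m1))"

(* This is dt/dtheta = |d orbit_pos/dtheta| / sqrt (2 G) (lemma time_density_eq), rewritten by
   orbit_pos_gap_product so that the bounds on G pin it between dens_lo and dens_hi. At the turning
   points sin theta = 0 any value between these bounds would do. *)
definition time_density :: "real \<Rightarrow> real" where
  "time_density \<theta> = (if sin \<theta> = 0 then dens_lo
     else sqrt ((orbit_pos \<theta> - \<alpha>) * (\<beta> - orbit_pos \<theta>) / (2 * G (orbit_pos \<theta>))))"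

lemma dens_lo_pos: "0 < dens_lo"
  using m1_pos m1_le_m2 by (simp add: dens_lo_def)

lemma time_density_bounds: "dens_lo \<le> time_density \<theta> \<and> time_density \<theta> \<le> dens_hi"
proof (cases "sin \<theta> = 0")
  case True
  then show ?thesis
    using m1_pos m1_le_m2 by (simp add: time_density_def dens_lo_def dens_hi_def frac_le)
next
  case False
  define q where "q = (orbit_pos \<theta> - \<alpha>) * (\<beta> - orbit_pos \<theta>)"
  have q: "0 < q" using orbit_pos_interior[OF False] by (simp add: q_def)
  have Gq: "m1 * q \<le> G (orbit_pos \<theta>)" "G (orbit_pos \<theta>) \<le> m2 * q"
    using G_bounds[OF orbit_pos_bounds] by (auto simp: q_def)
  have "0 < G (orbit_pos \<theta>)" using Gq m1_pos q by (smt (verit) mult_pos_pos)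
  then have "1 / (2 * m2) \<le> q / (2 * G (orbit_pos \<theta>))" "q / (2 * G (orbit_pos \<theta>)) \<le> 1 / (2 * m1)"
    using Gq q m1_pos m1_le_m2 by (simp_all add: field_simps)
  then show ?thesis using False by (simp add: time_density_def dens_lo_def dens_hi_def q_def)
qed

lemma time_density_integrable: "time_density integrable_on {a..b}"
proof (rule measurable_bounded_by_integrable_imp_integrable_real[where g="\<lambda>_. dens_hi"])
  have "(\<lambda>\<theta>. G (orbit_pos \<theta>)) \<in> borel_measurable borel"
    using isCont_G_orbit
    by (intro borel_measurable_continuous_onI continuous_at_imp_continuous_on) simp
  moreover have "orbit_pos \<in> borel_measurable borel"
    using isCont_orbit_pos
    by (intro borel_measurable_continuous_onI continuous_at_imp_continuous_on) simp
  ultimately have "time_density \<in> borel_measurable borel"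
    unfolding time_density_def by measurable
  then show "time_density \<in> borel_measurable (lebesgue_on {a..b})"
    by (intro measurable_restrict_space1 measurable_completion) (simp add: measurable_lborel1)
  show "\<bar>time_density \<theta>\<bar> \<le> dens_hi" for \<theta>
    using time_density_bounds[of \<theta>] dens_lo_pos by auto
qed auto

lemma isCont_time_density:
  assumes "sin \<theta> \<noteq> 0" shows "isCont time_density \<theta>"
proof -
  have "G (orbit_pos \<theta>) \<noteq> 0" using G_pos orbit_pos_interior[OF assms] by fastforce
  then have cont: "isCont (\<lambda>x. sqrt ((orbit_pos x - \<alpha>) * (\<beta> - orbit_pos x) / (2 * G (orbit_pos x)))) \<theta>"
    using isCont_orbit_pos isCont_G_orbit by (intro continuous_intros) auto
  have "eventually (\<lambda>x. sin x \<noteq> 0) (nhds \<theta>)"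
    using assms by (intro eventually_nhds_in_open[of "{x. sin x \<noteq> 0}", simplified])
      (auto intro!: open_Collect_neq continuous_intros)
  then have eq: "eventually (\<lambda>x.
      sqrt ((orbit_pos x - \<alpha>) * (\<beta> - orbit_pos x) / (2 * G (orbit_pos x))) = time_density x) (nhds \<theta>)"
    by (rule eventually_mono) (simp add: time_density_def)
  show ?thesis using cont isCont_cong[OF eq] by simp
qed

definition time_of :: "real \<Rightarrow> real" where
  "time_of \<theta> = (if 0 \<le> \<theta> then integral {0..\<theta>} time_density else - integral {\<theta>..0} time_density)"

lemma time_of_0: "time_of 0 = 0"
  by (simp add: time_of_def)

lemma time_of_diff:
  assumes "a \<le> b" shows "time_of b - time_of a = integral {a..b} time_density"
proof -
  consider "0 \<le> a" | "b < 0" | "a < 0" "0 \<le> b" using assms by linarith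
  then show ?thesis
  proof cases
    case 1
    then show ?thesis
      using Henstock_Kurzweil_Integration.integral_combine[OF 1 assms time_density_integrable] assms
      by (simp add: time_of_def)
  next
    case 2
    then show ?thesis
      using Henstock_Kurzweil_Integration.integral_combine[OF assms _ time_density_integrable, of 0] assms
      by (simp add: time_of_def)
  next
    case 3
    then show ?thesis
      using Henstock_Kurzweil_Integration.integral_combine[of a 0 b, OF _ _ time_density_integrable]
      by (simp add: time_of_def)
  qed
qed

lemma time_of_increment_bounds:
  assumes "a \<le> b"
  shows "dens_lo * (b - a) \<le> time_of b - time_of a \<and> time_of b - time_of a \<le> dens_hi * (b - a)"
proof -
  have "integral {a..b} (\<lambda>_. dens_lo) \<le> integral {a..b} time_density"
    by (rule integral_le) (auto simp: time_density_integrable time_density_bounds)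
  moreover have "integral {a..b} time_density \<le> integral {a..b} (\<lambda>_. dens_hi)"
    by (rule integral_le) (auto simp: time_density_integrable time_density_bounds)
  ultimately show ?thesis using assms by (simp add: time_of_diff mult.commute)
qed

lemma time_of_dist_bounds:
  "dens_lo * \<bar>a - b\<bar> \<le> \<bar>time_of a - time_of b\<bar> \<and> \<bar>time_of a - time_of b\<bar> \<le> dens_hi * \<bar>a - b\<bar>"
proof -
  have "dens_lo * \<bar>a - b\<bar> \<le> \<bar>time_of a - time_of b\<bar> \<and> \<bar>time_of a - time_of b\<bar> \<le> dens_hi * \<bar>a - b\<bar>"
    if "a \<le> b" for a b
  proof -
    have "0 \<le> dens_lo * (b - a)" using dens_lo_pos that by simp
    then show ?thesis using time_of_increment_bounds[OF that] that by simp
  qed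
  then show ?thesis by (metis abs_minus_commute linear)
qed

lemma strict_mono_time_of: "strict_mono time_of"
  using time_of_increment_bounds dens_lo_pos
  by (intro strict_monoI) (smt (verit) mult_pos_pos)

lemma isCont_time_of: "isCont time_of \<theta>"
proof -
  have "dens_hi-lipschitz_on UNIV time_of"
    using time_of_dist_bounds m1_pos
    by (intro lipschitz_onI) (auto simp: dist_real_def dens_hi_def less_imp_le)
  then show ?thesis
    using lipschitz_on_continuous_on continuous_on_eq_continuous_at by blast
qed

lemma surj_time_of: "surj time_of"
proof -
  have "\<exists>\<theta>. time_of \<theta> = t" for t
  proof -
    define r where "r = \<bar>t\<bar> / dens_lo"
    have r: "0 \<le> r" "dens_lo * r = \<bar>t\<bar>" using dens_lo_pos by (auto simp: r_def)
    have "time_of (- r) \<le> t" "t \<le> time_of r"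
      using time_of_increment_bounds[of "- r" 0] time_of_increment_bounds[of 0 r] r time_of_0
      by auto
    then show ?thesis using IVT[of time_of "- r" t r] isCont_time_of r by auto
  qed
  then show ?thesis by (metis surjI)
qed

lemma time_of_deriv:
  assumes "sin \<theta> \<noteq> 0" shows "(time_of has_real_derivative time_density \<theta>) (at \<theta>)"
proof -
  define a b where "a = \<theta> - 1" and "b = \<theta> + 1"
  have "((\<lambda>u. integral {a..u} time_density) has_vector_derivative time_density \<theta>)
      (at \<theta> within {a..b} - {})"
    using isCont_time_density[OF assms]
    by (intro integral_has_vector_derivative_continuous_at time_density_integrable)
      (auto simp: a_def b_def intro: continuous_at_imp_continuous_within)
  moreover have "at \<theta> within {a..b} = at \<theta>"
    by (rule at_within_interior) (simp add: a_def b_def)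
  ultimately have "((\<lambda>u. integral {a..u} time_density) has_real_derivative time_density \<theta>) (at \<theta>)"
    by (simp add: has_real_derivative_iff_has_vector_derivative)
  then have "((\<lambda>u. time_of a + integral {a..u} time_density) has_real_derivative time_density \<theta>)
      (at \<theta>)"
    using DERIV_add[OF DERIV_const] by fastforce
  then show ?thesis
  proof (rule has_field_derivative_transform_within_open[where S="{a<..<b}"])
    show "time_of a + integral {a..x} time_density = time_of x" if "x \<in> {a<..<b}" for x
      using time_of_diff[of a x] that by simp
  qed (auto simp: a_def b_def)
qed

definition angle_of :: "real \<Rightarrow> real" where
  "angle_of = inv time_of"

lemma time_of_angle_of: "time_of (angle_of t) = t"
  unfolding angle_of_def using surj_time_of by (simp add: surj_f_inv_f)

lemma angle_of_time_of: "angle_of (time_of \<theta>) = \<theta>"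
  unfolding angle_of_def using strict_mono_time_of by (simp add: strict_mono_imp_inj_on)

lemma angle_of_dist: "\<bar>angle_of s - angle_of t\<bar> \<le> \<bar>s - t\<bar> / dens_lo"
  using time_of_dist_bounds[of "angle_of s" "angle_of t"] dens_lo_pos
  by (simp add: time_of_angle_of field_simps)

lemma isCont_angle_of: "isCont angle_of t"
proof -
  have "(1 / dens_lo)-lipschitz_on UNIV angle_of"
    using angle_of_dist dens_lo_pos by (intro lipschitz_onI) (auto simp: dist_real_def)
  then show ?thesis
    using lipschitz_on_continuous_on continuous_on_eq_continuous_at by blast
qed

lemma angle_of_deriv:
  assumes "sin (angle_of t) \<noteq> 0"
  shows "(angle_of has_real_derivative inverse (time_density (angle_of t))) (at t)"
proof (rule DERIV_inverse_function[where f = time_of and a = "t - 1" and b = "t + 1"])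
  show "(time_of has_real_derivative time_density (angle_of t)) (at (angle_of t))"
    using time_of_deriv[OF assms] .
  show "time_density (angle_of t) \<noteq> 0"
    using time_density_bounds[of "angle_of t"] dens_lo_pos by auto
qed (simp_all add: time_of_angle_of isCont_angle_of)

lemma turning_times_isolated:
  assumes "sin (angle_of t) = 0" "s \<noteq> t" "\<bar>s - t\<bar> < dens_lo * pi"
  shows "sin (angle_of s) \<noteq> 0"
proof
  assume "sin (angle_of s) = 0"
  then obtain j :: int where j: "angle_of s = j * pi" by (auto simp: sin_zero_iff_int2)
  obtain i :: int where i: "angle_of t = i * pi" using assms(1) by (auto simp: sin_zero_iff_int2)
  have "\<bar>j - i\<bar> * pi = \<bar>angle_of s - angle_of t\<bar>"
    using i j by (simp add: abs_mult left_diff_distrib[symmetric])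
  also have "\<dots> \<le> \<bar>s - t\<bar> / dens_lo" by (rule angle_of_dist)
  also have "\<dots> < pi" using assms(3) dens_lo_pos by (simp add: field_simps)
  finally have "\<bar>of_int (j - i) :: real\<bar> < 1" by simp
  then have "j = i" by linarith
  then have "time_of (angle_of s) = time_of (angle_of t)" using i j by simp
  then show False using assms(2) by (simp add: time_of_angle_of)
qed

lemma time_density_eq:
  assumes "sin \<theta> \<noteq> 0"
  shows "time_density \<theta> = (\<beta> - \<alpha>) / 2 * \<bar>sin \<theta>\<bar> / sqrt (2 * G (orbit_pos \<theta>))"
proof -
  have "(orbit_pos \<theta> - \<alpha>) * (\<beta> - orbit_pos \<theta>) = ((\<beta> - \<alpha>) / 2 * \<bar>sin \<theta>\<bar>)^2"
    by (simp only: orbit_pos_gap_product power_mult_distrib power2_abs)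
  then show ?thesis
    using assms well_nonempty by (simp add: time_density_def real_sqrt_divide)
qed

definition orbit_vel :: "real \<Rightarrow> real" where
  "orbit_vel \<theta> = sgn (sin \<theta>) * sqrt (2 * G (orbit_pos \<theta>))"

lemma orbit_vel_mult_time_density: "orbit_vel \<theta> * time_density \<theta> = (\<beta> - \<alpha>) * sin \<theta> / 2"
proof (cases "sin \<theta> = 0")
  case False
  then have "0 < G (orbit_pos \<theta>)" using G_pos orbit_pos_interior by blast
  then show ?thesis
    using False by (simp add: orbit_vel_def time_density_eq sgn_real_def abs_if field_simps)
qed (simp add: orbit_vel_def)

lemma isCont_orbit_vel: "isCont orbit_vel \<theta>"
proof (cases "sin \<theta> = 0")
  case False
  then show ?thesis
    unfolding orbit_vel_def using isCont_G_orbit by (intro continuous_intros) auto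
next
  case True
  have "((\<lambda>x. sqrt (2 * G (orbit_pos x))) \<longlongrightarrow> 0) (at \<theta>)"
    using isCont_G_orbit[of \<theta>] G_orbit_turning[OF True]
    by (auto intro!: tendsto_eq_intros simp: isCont_def)
  then have "(orbit_vel \<longlongrightarrow> 0) (at \<theta>)"
    by (rule Lim_null_comparison[rotated])
      (auto simp: orbit_vel_def abs_mult sgn_real_def G_orbit_nonneg)
  then show ?thesis using True by (simp add: isCont_def orbit_vel_def)
qed

lemma orbit_vel_deriv:
  assumes "sin \<theta> \<noteq> 0"
  shows "(orbit_vel has_real_derivative F (orbit_pos \<theta>) * time_density \<theta>) (at \<theta>)"
proof -
  have G_pos': "0 < G (orbit_pos \<theta>)" using G_pos orbit_pos_interior[OF assms] by blast
  have d: "((\<lambda>x. sgn (sin \<theta>) * sqrt (2 * G (orbit_pos x))) has_real_derivative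
      sgn (sin \<theta>) * (inverse (sqrt (2 * G (orbit_pos \<theta>))) / 2 *
        (2 * (F (orbit_pos \<theta>) * ((\<beta> - \<alpha>) * sin \<theta> / 2))))) (at \<theta>)"
    using G_pos' by (intro DERIV_cmult DERIV_chain2[OF DERIV_real_sqrt] DERIV_chain2[OF G_deriv]
        orbit_pos_deriv orbit_pos_bounds) auto
  have eq: "sgn (sin \<theta>) * (inverse (sqrt (2 * G (orbit_pos \<theta>))) / 2 *
        (2 * (F (orbit_pos \<theta>) * ((\<beta> - \<alpha>) * sin \<theta> / 2)))) = F (orbit_pos \<theta>) * time_density \<theta>"
    using assms G_pos' by (simp add: time_density_eq sgn_real_def abs_if field_simps)
  from d have d': "((\<lambda>x. sgn (sin \<theta>) * sqrt (2 * G (orbit_pos x))) has_real_derivative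
      F (orbit_pos \<theta>) * time_density \<theta>) (at \<theta>)"
    unfolding eq .
  have ev: "eventually (\<lambda>x. sgn (sin \<theta>) * sqrt (2 * G (orbit_pos x)) = orbit_vel x) (nhds \<theta>)"
  proof -
    have "eventually (\<lambda>x. 0 < sin x * sin \<theta>) (nhds \<theta>)"
      using assms by (intro eventually_nhds_in_open[of "{x. 0 < sin x * sin \<theta>}", simplified])
        (auto intro!: open_Collect_less continuous_intros simp: zero_less_mult_iff linorder_neq_iff)
    then show ?thesis
      by (rule eventually_mono) (auto simp: orbit_vel_def sgn_real_def zero_less_mult_iff)
  qed
  show ?thesis using DERIV_cong_ev[OF refl ev refl] d' by simp
qed

definition position :: "real \<Rightarrow> real" where
  "position t = orbit_pos (angle_of t)"

definition velocity :: "real \<Rightarrow> real" where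
  "velocity t = orbit_vel (angle_of t)"

lemma position_bounds: "\<alpha> \<le> position t \<and> position t \<le> \<beta>"
  by (simp add: position_def orbit_pos_bounds)

lemma DERIV_from_off_turning:
  assumes "isCont f t" "isCont f' t"
    and "\<And>s. sin (angle_of s) \<noteq> 0 \<Longrightarrow> (f has_real_derivative f' s) (at s)"
  shows "(f has_real_derivative f' t) (at t)"
proof (cases "sin (angle_of t) = 0")
  case True
  show ?thesis
    using assms(1,2) mult_pos_pos[OF dens_lo_pos pi_gt_zero]
    by (rule DERIV_from_punctured_nbhd)
      (simp add: assms(3) turning_times_isolated[OF True])
qed (rule assms(3))

lemma position_deriv: "(position has_real_derivative velocity t) (at t)"
proof (rule DERIV_from_off_turning)
  show "isCont position t" "isCont velocity t"
    unfolding position_def[abs_def] velocity_def[abs_def]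
    using isCont_angle_of isCont_orbit_pos isCont_orbit_vel by (auto intro: isCont_o2)
  fix s assume turning: "sin (angle_of s) \<noteq> 0"
  have "0 < time_density (angle_of s)"
    using time_density_bounds dens_lo_pos by (meson less_le_trans)
  then have "(\<beta> - \<alpha>) * sin (angle_of s) / 2 * inverse (time_density (angle_of s)) = velocity s"
    using orbit_vel_mult_time_density[of "angle_of s"] by (simp add: velocity_def field_simps)
  then show "(position has_real_derivative velocity s) (at s)"
    using DERIV_chain2[OF orbit_pos_deriv angle_of_deriv[OF turning]]
    by (simp add: position_def[abs_def])
qed

lemma velocity_deriv: "(velocity has_real_derivative F (position t)) (at t)"
proof (rule DERIV_from_off_turning)
  show "isCont velocity t"
    unfolding velocity_def[abs_def]
    using isCont_angle_of isCont_orbit_vel by (auto intro: isCont_o2)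
  have "continuous_on UNIV position"
    using position_deriv by (meson DERIV_isCont continuous_at_imp_continuous_on)
  then have "continuous_on UNIV (\<lambda>t. F (position t))"
    using position_bounds by (intro continuous_on_compose2[OF F_cont]) auto
  then show "isCont (\<lambda>t. F (position t)) t"
    by (simp add: continuous_on_eq_continuous_at)
  fix s assume turning: "sin (angle_of s) \<noteq> 0"
  have "0 < time_density (angle_of s)"
    using time_density_bounds dens_lo_pos by (meson less_le_trans)
  then have eq: "F (orbit_pos (angle_of s)) * time_density (angle_of s)
      * inverse (time_density (angle_of s)) = F (position s)"
    by (simp add: position_def)
  show "(velocity has_real_derivative F (position s)) (at s)"
    using DERIV_chain2[OF orbit_vel_deriv[OF turning] angle_of_deriv[OF turning]]
    unfolding eq velocity_def[abs_def] .
qed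

lemma time_of_le: "\<theta> \<le> 0 \<Longrightarrow> time_of \<theta> \<le> dens_lo * \<theta>"
  using time_of_increment_bounds[of \<theta> 0] time_of_0 by simp

lemma frequently_time_of_at_bot:
  assumes "\<And>n::nat. P (time_of (- (real (2 * n + k) * pi)))"
  shows "frequently P at_bot"
  unfolding frequently_def eventually_at_bot_linorder
proof clarsimp
  fix N :: real
  obtain n :: nat where n: "- N / (2 * pi * dens_lo) < n"
    using reals_Archimedean2 by blast
  have "time_of (- (real (2 * n + k) * pi)) \<le> dens_lo * (- (real (2 * n + k) * pi))"
    by (rule time_of_le) simp
  also have "\<dots> \<le> - (2 * pi * dens_lo) * n"
    using dens_lo_pos by (simp add: algebra_simps)
  also have "\<dots> < N"
    using n dens_lo_pos by (simp add: field_simps)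
  finally show "\<exists>t\<le>N. P t"
    using assms by (meson less_imp_le)
qed

lemma frequently_position_eq_left: "frequently (\<lambda>t. position t = \<alpha>) at_bot"
  by (rule frequently_time_of_at_bot[where k = 0])
    (simp add: position_def angle_of_time_of orbit_pos_def)

lemma frequently_position_eq_right: "frequently (\<lambda>t. position t = \<beta>) at_bot"
proof (rule frequently_time_of_at_bot[where k = 1])
  fix n :: nat
  have "cos (real (2 * n + 1) * pi) = -1" by (simp only: cos_npi) simp
  then show "position (time_of (- (real (2 * n + 1) * pi))) = \<beta>"
    by (simp only: position_def angle_of_time_of orbit_pos_def cos_minus) (simp add: field_simps)
qed

end

lemma energy_well_periodic_solution:
  assumes "energy_well G F \<alpha> \<beta> m1 m2"
  obtains w y :: "real \<Rightarrow> real"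
  where "\<And>t. (w has_real_derivative y t) (at t)" "\<And>t. (y has_real_derivative F (w t)) (at t)"
    and "\<And>t. \<alpha> \<le> w t \<and> w t \<le> \<beta>"
    and "frequently (\<lambda>t. w t = \<alpha>) at_bot" "frequently (\<lambda>t. w t = \<beta>) at_bot"
  using energy_well.position_deriv[OF assms] energy_well.velocity_deriv[OF assms]
    energy_well.position_bounds[OF assms] energy_well.frequently_position_eq_left[OF assms]
    energy_well.frequently_position_eq_right[OF assms]
  by blast

lemma min_mult_sum_bounds:
  fixes a b :: real
  assumes "0 \<le> a" "0 \<le> b"
  shows "a * b \<le> min a b * (a + b)" "min a b * (a + b) \<le> 2 * (a * b)"
  using assms mult_left_mono[of a b a] mult_right_mono[of b a b]
    mult_left_mono[of a b b] mult_right_mono[of b a a]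
  by (auto simp: min_def algebra_simps)

lemma zero_endpoints_upper_bound:
  fixes G F :: "real \<Rightarrow> real"
  assumes ends: "G \<alpha> = 0" "G \<beta> = 0" and x: "\<alpha> \<le> x" "x \<le> \<beta>"
    and G_deriv: "\<And>x. \<alpha> \<le> x \<Longrightarrow> x \<le> \<beta> \<Longrightarrow> (G has_real_derivative F x) (at x)"
    and F_bound: "\<And>x. \<alpha> \<le> x \<Longrightarrow> x \<le> \<beta> \<Longrightarrow> \<bar>F x\<bar> \<le> L"
  shows "G x \<le> L * min (x - \<alpha>) (\<beta> - x)"
proof -
  have deriv: "(G has_real_derivative F y) (at y)" and bound: "- L \<le> F y" "F y \<le> L"
    if "\<alpha> \<le> y" "y \<le> \<beta>" for y
    using G_deriv[OF that] F_bound[OF that] by (auto simp: abs_le_iff)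
  have "G x - G \<alpha> \<le> L * (x - \<alpha>)"
    by (rule DERIV_le_imp_increment_le[where F = F]) (use x deriv bound in auto)
  moreover have "(- L) * (\<beta> - x) \<le> G \<beta> - G x"
    by (rule DERIV_ge_imp_increment_ge[where F = F]) (use x deriv bound in auto)
  ultimately show ?thesis using ends by (simp add: min_def)
qed

lemma sign_pattern_lower_bound:
  fixes G F :: "real \<Rightarrow> real"
  assumes order: "\<alpha> \<le> a" "a \<le> c" "c \<le> b" "b \<le> \<beta>" "\<alpha> < \<beta>"
    and ends: "G \<alpha> = 0" "G \<beta> = 0"
    and deriv: "\<And>x. \<alpha> \<le> x \<Longrightarrow> x \<le> \<beta> \<Longrightarrow> (G has_real_derivative F x) (at x)"
    and kl: "0 \<le> kl" and left_slope: "\<And>x. \<alpha> \<le> x \<Longrightarrow> x \<le> a \<Longrightarrow> kl \<le> F x"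
    and rising: "\<And>x. a \<le> x \<Longrightarrow> x \<le> c \<Longrightarrow> 0 \<le> F x"
    and falling: "\<And>x. c \<le> x \<Longrightarrow> x \<le> b \<Longrightarrow> F x \<le> 0"
    and kr: "0 \<le> kr" and right_slope: "\<And>x. b \<le> x \<Longrightarrow> x \<le> \<beta> \<Longrightarrow> F x \<le> - kr"
    and x: "\<alpha> \<le> x" "x \<le> \<beta>"
  shows "min (kl * (a - \<alpha>)) (kr * (\<beta> - b)) / (\<beta> - \<alpha>) * min (x - \<alpha>) (\<beta> - x) \<le> G x"
    (is "?k * ?m \<le> _")
proof -
  have deriv': "(G has_real_derivative F y) (at y)" if "u \<le> y" "y \<le> v" "\<alpha> \<le> u" "v \<le> \<beta>" for u v y
    using deriv that by simp
  have "?k \<le> kl * (a - \<alpha>) / (\<beta> - \<alpha>)" "?k \<le> kr * (\<beta> - b) / (\<beta> - \<alpha>)"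
    using order by (simp_all add: divide_right_mono)
  moreover have "kl * (a - \<alpha>) / (\<beta> - \<alpha>) \<le> kl" "kr * (\<beta> - b) / (\<beta> - \<alpha>) \<le> kr"
    using order kl kr by (simp_all add: field_simps mult_right_mono)
  ultimately have k_le: "?k \<le> kl" "?k \<le> kr" by linarith+
  have k_nonneg: "0 \<le> ?k" using order kl kr by simp
  have m: "0 \<le> ?m" "?m \<le> x - \<alpha>" "?m \<le> \<beta> - x" using x by auto
  have G_a: "kl * (a - \<alpha>) \<le> G a"
    using DERIV_ge_imp_increment_ge[of \<alpha> a G F kl] order ends left_slope deriv' by simp
  have G_b: "kr * (\<beta> - b) \<le> G b"
    using DERIV_le_imp_increment_le[of b \<beta> G F "- kr"] order ends right_slope deriv' by simp
  have far: "?k * ?m \<le> min (kl * (a - \<alpha>)) (kr * (\<beta> - b))"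
  proof -
    have "?k * ?m \<le> ?k * (\<beta> - \<alpha>)" using k_nonneg m x by (intro mult_left_mono) auto
    then show ?thesis using order by simp
  qed
  consider "x \<le> a" | "a \<le> x" "x \<le> c" | "c \<le> x" "x \<le> b" | "b \<le> x" by linarith
  then show ?thesis
  proof cases
    case 1
    have "kl * (x - \<alpha>) \<le> G x"
      using DERIV_ge_imp_increment_ge[of \<alpha> x G F kl] 1 x order ends left_slope deriv' by simp
    moreover have "?k * ?m \<le> kl * (x - \<alpha>)" using k_le k_nonneg m by (intro mult_mono) auto
    ultimately show ?thesis by linarith
  next
    case 2
    have "0 * (x - a) \<le> G x - G a"
      using DERIV_ge_imp_increment_ge[of a x G F 0] 2 order x rising deriv' by simp
    then show ?thesis using far G_a by simp
  next
    case 3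
    have "G b - G x \<le> 0 * (b - x)"
      using DERIV_le_imp_increment_le[of x b G F 0] 3 order x falling deriv' by simp
    then show ?thesis using far G_b by simp
  next
    case 4
    have "G \<beta> - G x \<le> - kr * (\<beta> - x)"
      using DERIV_le_imp_increment_le[of x \<beta> G F "- kr"] 4 x order right_slope deriv' by simp
    moreover have "?k * ?m \<le> kr * (\<beta> - x)" using k_le k_nonneg m by (intro mult_mono) auto
    ultimately show ?thesis using ends by simp
  qed
qed

lemma energy_well_if_sign_pattern:
  fixes G F :: "real \<Rightarrow> real"
  assumes order: "\<alpha> < a" "a \<le> c" "c \<le> b" "b < \<beta>"
    and ends: "G \<alpha> = 0" "G \<beta> = 0"
    and deriv: "\<And>x. \<alpha> \<le> x \<Longrightarrow> x \<le> \<beta> \<Longrightarrow> (G has_real_derivative F x) (at x)"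
    and F_cont: "continuous_on {\<alpha>..\<beta>} F"
    and kl: "0 < kl" "\<And>x. \<alpha> \<le> x \<Longrightarrow> x \<le> a \<Longrightarrow> kl \<le> F x"
    and "\<And>x. a \<le> x \<Longrightarrow> x \<le> c \<Longrightarrow> 0 \<le> F x"
    and "\<And>x. c \<le> x \<Longrightarrow> x \<le> b \<Longrightarrow> F x \<le> 0"
    and kr: "0 < kr" "\<And>x. b \<le> x \<Longrightarrow> x \<le> \<beta> \<Longrightarrow> F x \<le> - kr"
  shows "\<exists>m1 m2. energy_well G F \<alpha> \<beta> m1 m2"
proof -
  define D where "D = \<beta> - \<alpha>"
  define k where "k = min (kl * (a - \<alpha>)) (kr * (\<beta> - b)) / D"
  obtain L where L: "\<And>x. \<alpha> \<le> x \<Longrightarrow> x \<le> \<beta> \<Longrightarrow> \<bar>F x\<bar> \<le> L"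
    using compact_imp_bounded[OF compact_continuous_image[OF F_cont compact_Icc]]
    by (fastforce simp: bounded_iff)
  have D: "0 < D" using order by (simp add: D_def)
  have k: "0 < k" using order kl(1) kr(1) D by (simp add: k_def)
  have "energy_well G F \<alpha> \<beta> (k / D) (2 * L / D)"
  proof
    fix x assume x: "\<alpha> \<le> x" "x \<le> \<beta>"
    have sum: "(x - \<alpha>) + (\<beta> - x) = D" by (simp add: D_def)
    note prod = min_mult_sum_bounds[of "x - \<alpha>" "\<beta> - x", unfolded sum]
    have L_nonneg: "0 \<le> L" using L[of \<alpha>] order by simp
    have "k / D * ((x - \<alpha>) * (\<beta> - x)) \<le> k / D * (min (x - \<alpha>) (\<beta> - x) * D)"
      using prod(1) x k D by (intro mult_left_mono) auto
    also have "\<dots> = k * min (x - \<alpha>) (\<beta> - x)" using D by simp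
    also have "\<dots> \<le> G x"
      unfolding k_def D_def using x order
      by (intro sign_pattern_lower_bound[where c = c]) (use assms in auto)
    finally have lower: "k / D * ((x - \<alpha>) * (\<beta> - x)) \<le> G x" .
    have "G x \<le> L * min (x - \<alpha>) (\<beta> - x)"
      using x by (intro zero_endpoints_upper_bound[where F = F]) (use assms L in auto)
    also have "\<dots> = L / D * (min (x - \<alpha>) (\<beta> - x) * D)" using D by simp
    also have "\<dots> \<le> L / D * (2 * ((x - \<alpha>) * (\<beta> - x)))"
      using prod(2) x L_nonneg D by (intro mult_left_mono) auto
    finally show "k / D * ((x - \<alpha>) * (\<beta> - x)) \<le> G x \<and> G x \<le> 2 * L / D * ((x - \<alpha>) * (\<beta> - x))"
      using lower by (simp add: mult_ac)
  qed (use order deriv F_cont k D in auto)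
  then show ?thesis by blast
qed

section \<open>The Emden-Fowler energy\<close>

definition emden_force :: "real \<Rightarrow> real \<Rightarrow> real" where
  "emden_force p x = (x - x powr p) / 4"

definition emden_energy :: "real \<Rightarrow> real \<Rightarrow> real" where
  "emden_energy p x = (x^2 - (1/2)^2) / 8 - (x powr (p + 1) - (1/2) powr (p + 1)) / (4 * (p + 1))"

lemma emden_energy_half: "emden_energy p (1/2) = 0"
  by (simp add: emden_energy_def)

lemma continuous_on_emden_force: "0 < a \<Longrightarrow> continuous_on {a..b} (emden_force p)"
  unfolding emden_force_def by (intro continuous_intros) auto

lemma emden_force_eq: "0 < x \<Longrightarrow> emden_force p x = x * (1 - x powr (p - 1)) / 4"
  by (simp add: emden_force_def powr_diff field_simps)

context
  fixes p :: real
  assumes p: "1 < p"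
begin

lemma emden_energy_deriv:
  assumes "0 < x" shows "(emden_energy p has_real_derivative emden_force p x) (at x)"
proof -
  have "(emden_energy p has_real_derivative 2 * x / 8 - (p + 1) * x powr p / (4 * (p + 1))) (at x)"
    unfolding emden_energy_def using assms p
    by (auto intro!: derivative_eq_intros has_real_derivative_powr[THEN DERIV_cong])
  moreover have "2 * x / 8 - (p + 1) * x powr p / (4 * (p + 1)) = emden_force p x"
    using p by (simp add: emden_force_def field_simps)
  ultimately show ?thesis by simp
qed

lemma emden_force_lower:
  assumes "1/2 \<le> x" "x \<le> 3/4"
  shows "(1 - (3/4) powr (p - 1)) / 8 \<le> emden_force p x"
proof -
  have "x powr (p - 1) \<le> (3/4) powr (p - 1)" using assms p by (intro powr_mono2) auto
  moreover have "(3/4::real) powr (p - 1) < 1" using powr_less_mono2[of "p - 1" "3/4" 1] p by simp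
  ultimately have "1/2 * (1 - (3/4) powr (p - 1)) \<le> x * (1 - x powr (p - 1))"
    using assms by (intro mult_mono) auto
  then show ?thesis using assms by (simp add: emden_force_eq)
qed

lemma emden_force_lower_pos: "0 < (1 - (3/4::real) powr (p - 1)) / 8"
  using powr_less_mono2[of "p - 1" "3/4" 1] p by simp

lemma emden_force_nonneg: "0 < x \<Longrightarrow> x \<le> 1 \<Longrightarrow> 0 \<le> emden_force p x"
  using p powr_le1[of "p - 1" x] by (simp add: emden_force_eq)

lemma emden_force_nonpos: "1 \<le> x \<Longrightarrow> emden_force p x \<le> 0"
  using p ge_one_powr_ge_zero[of x "p - 1"] by (simp add: emden_force_eq mult_nonneg_nonpos)

lemma emden_force_upper:
  assumes "1 \<le> m" "m \<le> x"
  shows "emden_force p x \<le> (1 - m powr (p - 1)) / 4"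
proof -
  have "1 \<le> m powr (p - 1)" "m powr (p - 1) \<le> x powr (p - 1)"
    using assms p by (auto intro: ge_one_powr_ge_zero powr_mono2)
  then have "x * (1 - x powr (p - 1)) \<le> 1 * (1 - x powr (p - 1))"
    using assms by (intro mult_right_mono_neg) auto
  also have "\<dots> \<le> 1 - m powr (p - 1)"
    using \<open>m powr (p - 1) \<le> x powr (p - 1)\<close> by simp
  finally have "x * (1 - x powr (p - 1)) \<le> 1 - m powr (p - 1)" .
  then show ?thesis using assms by (simp add: emden_force_eq)
qed

lemma emden_energy_e_nonpos: "emden_energy p (exp 1) \<le> 0"
proof -
  have e: "exp 1 powr (p + 1) = exp 2 * exp (p - 1)" by (simp add: powr_def flip: exp_add)
  have "exp 2 * (p + 1) \<le> exp 2 * (2 * p)" using p by simp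
  also have "\<dots> \<le> 2 * (exp 2 * exp (p - 1))" using exp_ge_add_one_self[of "p - 1"] by simp
  finally have "exp 2 / 8 \<le> exp 1 powr (p + 1) / (4 * (p + 1))"
    using p unfolding e by (simp add: field_simps)
  moreover have "(1/2::real) powr (p + 1) \<le> (1/2) powr 2" using p by (intro powr_mono') auto
  then have "(1/2::real) powr (p + 1) \<le> 1/4" by (simp add: powr_numeral power2_eq_square)
  then have "(1/2::real) powr (p + 1) / (4 * (p + 1)) \<le> (1/4) / 8"
    using p by (intro frac_le) auto
  moreover have "(exp 1)^2 = exp (2::real)" "(1/2::real)^2 = 1/4"
    by (simp_all add: power2_eq_square flip: exp_add)
  ultimately show ?thesis unfolding emden_energy_def diff_divide_distrib by linarith
qed

lemma emden_energy_second_zero: "\<exists>\<beta>>1. emden_energy p \<beta> = 0"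
proof -
  define k where "k = (1 - (3/4::real) powr (p - 1)) / 8"
  have deriv: "(emden_energy p has_real_derivative emden_force p y) (at y)" if "1/2 \<le> y" for y
    using that by (intro emden_energy_deriv) simp
  have "k * (3/4 - 1/2) \<le> emden_energy p (3/4) - emden_energy p (1/2)"
    by (rule DERIV_ge_imp_increment_ge) (auto intro: deriv emden_force_lower[folded k_def])
  moreover have "0 * (1 - 3/4) \<le> emden_energy p 1 - emden_energy p (3/4)"
    by (rule DERIV_ge_imp_increment_ge) (auto intro: deriv emden_force_nonneg)
  ultimately have pos: "0 < emden_energy p 1"
    using emden_force_lower_pos by (simp add: emden_energy_half k_def)
  have "\<forall>x. 1 \<le> x \<and> x \<le> exp 1 \<longrightarrow> isCont (emden_energy p) x"
    using deriv DERIV_isCont by force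
  then obtain \<beta> where "1 \<le> \<beta>" "\<beta> \<le> exp 1" "emden_energy p \<beta> = 0"
    using IVT2[of "emden_energy p" "exp 1" 0 1] pos emden_energy_e_nonpos by auto
  moreover from this pos have "\<beta> \<noteq> 1" by auto
  ultimately show ?thesis by (auto simp: order_le_less)
qed

lemma emden_energy_well:
  "\<exists>\<beta> m1 m2. 1 < \<beta> \<and> energy_well (emden_energy p) (emden_force p) (1/2) \<beta> m1 m2"
proof -
  obtain \<beta> where \<beta>: "1 < \<beta>" "emden_energy p \<beta> = 0"
    using emden_energy_second_zero by blast
  define m where "m = (1 + \<beta>) / 2"
  have m: "1 < m" "m < \<beta>" using \<beta> by (simp_all add: m_def)
  have "1 powr (p - 1) < m powr (p - 1)" using m p by (intro powr_less_mono2) auto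
  then have k2: "0 < (m powr (p - 1) - 1) / 4" by simp
  have "\<exists>m1 m2. energy_well (emden_energy p) (emden_force p) (1/2) \<beta> m1 m2"
  proof (rule energy_well_if_sign_pattern[where a = "3/4" and c = 1 and b = m
        and kl = "(1 - (3/4) powr (p - 1)) / 8" and kr = "(m powr (p - 1) - 1) / 4"])
    show "continuous_on {1/2..\<beta>} (emden_force p)" by (rule continuous_on_emden_force) simp
    show "(1 - (3/4) powr (p - 1)) / 8 \<le> emden_force p x" if "1/2 \<le> x" "x \<le> 3/4" for x
      using that by (rule emden_force_lower)
    show "emden_force p x \<le> - ((m powr (p - 1) - 1) / 4)" if "m \<le> x" for x
      using emden_force_upper[of m x] that m by (simp add: field_simps)
  qed (use m \<beta> k2 emden_force_lower_pos in \<open>auto intro: emden_energy_half emden_energy_deriv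
      emden_force_nonneg emden_force_nonpos\<close>)
  then show ?thesis using \<beta>(1) by blast
qed


lemma emden_periodic_solution:
  obtains \<beta> :: real and w y :: "real \<Rightarrow> real"
  where "1 < \<beta>" "\<And>t. (w has_real_derivative y t) (at t)"
    and "\<And>t. (y has_real_derivative emden_force p (w t)) (at t)"
    and "\<And>t. 1/2 \<le> w t \<and> w t \<le> \<beta>"
    and "frequently (\<lambda>t. w t = 1/2) at_bot" "frequently (\<lambda>t. w t = \<beta>) at_bot"
  using emden_energy_well energy_well_periodic_solution by metis

end

section \<open>The Emden-Fowler transformation\<close>

lemma emden_fowler_transform:
  fixes \<sigma> p a c :: real and w y :: "real \<Rightarrow> real"
  assumes exponent: "\<sigma> + 2 = a * (1 - p)"
    and const: "0 < c" "c powr (p - 1) = a * (1 - a)"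
    and w_pos: "\<And>t. 0 < w t"
    and w_deriv: "\<And>t. (w has_real_derivative y t) (at t)"
    and y_deriv: "\<And>t. (y has_real_derivative
      (1 - 2 * a) * y t + a * (1 - a) * (w t - w t powr p)) (at t)"
  defines "u \<equiv> \<lambda>x. c * x powr a * w (ln x)"
  shows "\<exists>u' u''. (\<forall>x>0. (u has_real_derivative u' x) (at x)) \<and>
    (\<forall>x>0. (u' has_real_derivative u'' x) (at x)) \<and> continuous_on {0<..} u'' \<and>
    (\<forall>x>0. u'' x + x powr \<sigma> * (u x) powr p = 0)"
proof -
  define z where "z t = (1 - 2 * a) * y t + a * (1 - a) * (w t - w t powr p)" for t
  define u' where "u' x = c * x powr (a - 1) * (a * w (ln x) + y (ln x))" for x
  define u'' where "u'' x = - (x powr \<sigma> * (u x) powr p)" for x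
  have u_deriv: "(u has_real_derivative u' x) (at x)" if x: "0 < x" for x
    unfolding u_def u'_def using x
    by (auto intro!: derivative_eq_intros DERIV_chain2[OF w_deriv]
        has_real_derivative_powr[THEN DERIV_cong] simp: powr_diff field_simps)
  have u'_deriv:
    "(u' has_real_derivative - c * a * (1 - a) * x powr (a - 2) * w (ln x) powr p) (at x)"
    if x: "0 < x" for x
  proof -
    have powr_eqs: "x powr (a - 1) = x powr a / x" "x powr (a - 1 - 1) = x powr a / x^2"
      "x powr (a - 2) = x powr a / x^2"
      using x by (simp_all add: powr_diff powr_add power2_eq_square flip: diff_diff_eq)
    have "(u' has_real_derivative c * ((a - 1) * x powr (a - 1 - 1)) * (a * w (ln x) + y (ln x))
        + (a * (y (ln x) * inverse x) + z (ln x) * inverse x) * (c * x powr (a - 1))) (at x)"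
      unfolding u'_def[abs_def] z_def using x
      by (intro DERIV_mult DERIV_cmult DERIV_add has_real_derivative_powr
          DERIV_chain2[OF w_deriv DERIV_ln] DERIV_chain2[OF y_deriv DERIV_ln])
    moreover have "c * ((a - 1) * x powr (a - 1 - 1)) * (a * w (ln x) + y (ln x))
        + (a * (y (ln x) * inverse x) + z (ln x) * inverse x) * (c * x powr (a - 1))
        = - c * a * (1 - a) * x powr (a - 2) * w (ln x) powr p"
      unfolding powr_eqs z_def using x by (simp add: field_simps power2_eq_square)
    ultimately show ?thesis by (rule DERIV_cong)
  qed
  have u_pos: "0 < u x" if "0 < x" for x
    using that const w_pos by (simp add: u_def)
  have u''_eq: "- c * a * (1 - a) * x powr (a - 2) * w (ln x) powr p = u'' x" if x: "0 < x" for x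
  proof -
    have "\<sigma> + a * p = a - 2" using exponent by (simp add: algebra_simps)
    then have "x powr \<sigma> * x powr (a * p) = x powr (a - 2)" by (simp flip: powr_add)
    moreover have "c powr p = c * (a * (1 - a))"
      using const by (simp add: powr_add[of c 1 "p - 1", simplified])
    ultimately show ?thesis
      using x const w_pos by (simp add: u''_def u_def powr_mult powr_powr mult_ac)
  qed
  have "continuous_on {0<..} u''"
  proof -
    have "isCont u'' x" if "0 < x" for x
      using that u_pos[OF that] DERIV_isCont[OF u_deriv[OF that]]
      unfolding u''_def[abs_def] by (intro continuous_intros) auto
    then show ?thesis by (simp add: continuous_at_imp_continuous_on)
  qed
  moreover have "u'' x + x powr \<sigma> * (u x) powr p = 0" for x
    by (simp add: u''_def)
  ultimately show ?thesis
    using u_deriv u'_deriv u''_eq by (intro exI[of _ u'] exI[of _ u'']) auto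
qed

section \<open>Oscillation of the ratio near zero\<close>

lemma frequently_at_right_0_ln:
  "frequently P at_bot \<Longrightarrow> frequently (\<lambda>x. P (ln x)) (at_right (0::real))"
  by (simp add: frequently_filtermap[symmetric] filtermap_ln_at_right)

lemma frequently_at_right_0_iff:
  "frequently P (at_right (0::real)) \<longleftrightarrow> (\<forall>\<epsilon>>0. \<exists>x. 0 < x \<and> x < \<epsilon> \<and> P x)"
  unfolding frequently_def eventually_at_right_field by auto

lemma not_tendsto_if_frequently_two_values:
  fixes f :: "'a \<Rightarrow> real"
  assumes "a \<noteq> b" "frequently (\<lambda>x. f x = a) F" "frequently (\<lambda>x. f x = b) F"
  shows "\<not> (f \<longlongrightarrow> L) F"
proof
  assume "(f \<longlongrightarrow> L) F"
  moreover have "0 < dist a b / 2" using assms(1) by simp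
  ultimately have near: "eventually (\<lambda>x. dist (f x) L < dist a b / 2) F"
    by (rule tendstoD)
  have "dist a L < dist a b / 2" "dist b L < dist a b / 2"
    using frequently_ex[OF frequently_eventually_frequently[OF assms(2) near]]
      frequently_ex[OF frequently_eventually_frequently[OF assms(3) near]] by auto
  then show False using dist_triangle_half_l by fastforce
qed

lemma sign_changes_inf_near_0_iff_frequently:
  "sign_changes_inf_near_0 f \<longleftrightarrow>
    frequently (\<lambda>x. 0 < f x) (at_right 0) \<and> frequently (\<lambda>x. f x < 0) (at_right 0)"
  unfolding sign_changes_inf_near_0_def frequently_at_right_0_iff by blast

lemma log_oscillating_ratio:
  fixes f g w :: "real \<Rightarrow> real"
  assumes ratio: "\<And>x. 0 < x \<Longrightarrow> f x = g x * w (ln x)" and g_pos: "\<And>x. 0 < x \<Longrightarrow> 0 < g x"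
    and range: "\<And>t. lo \<le> w t \<and> w t \<le> hi" and "lo < 1" "1 < hi"
    and lo: "frequently (\<lambda>t. w t = lo) at_bot" and hi: "frequently (\<lambda>t. w t = hi) at_bot"
  shows "sign_changes_inf_near_0 (\<lambda>x. f x - g x)"
    and "bounded ((\<lambda>x. f x / g x) ` {0<..})"
    and "\<not> (\<exists>L. ((\<lambda>x. f x / g x) \<longlongrightarrow> L) (at_right 0))"
proof -
  have quotient: "f x / g x = w (ln x)" and diff: "f x - g x = g x * (w (ln x) - 1)"
    if "0 < x" for x
    using ratio[OF that] g_pos[OF that] by (simp_all add: algebra_simps)
  have lo': "frequently (\<lambda>x. w (ln x) = lo \<and> 0 < x) (at_right 0)"
    and hi': "frequently (\<lambda>x. w (ln x) = hi \<and> 0 < x) (at_right 0)"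
    using lo hi by (auto intro!: frequently_eventually_frequently frequently_at_right_0_ln
        eventually_at_right_less)
  have "frequently (\<lambda>x. 0 < f x - g x) (at_right 0)"
    using hi' by (rule frequently_elim1) (use \<open>1 < hi\<close> in \<open>auto simp: diff g_pos\<close>)
  moreover have "frequently (\<lambda>x. f x - g x < 0) (at_right 0)"
    using lo' by (rule frequently_elim1) (use \<open>lo < 1\<close> in \<open>auto simp: diff g_pos mult_pos_neg\<close>)
  ultimately show "sign_changes_inf_near_0 (\<lambda>x. f x - g x)"
    by (simp add: sign_changes_inf_near_0_iff_frequently)
  show "bounded ((\<lambda>x. f x / g x) ` {0<..})"
    by (rule bounded_subset[OF bounded_closed_interval[of lo hi]]) (auto simp: quotient range)
  have "frequently (\<lambda>x. f x / g x = lo) (at_right 0)"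
    using lo' by (rule frequently_elim1) (simp add: quotient)
  moreover have "frequently (\<lambda>x. f x / g x = hi) (at_right 0)"
    using hi' by (rule frequently_elim1) (simp add: quotient)
  ultimately show "\<not> (\<exists>L. ((\<lambda>x. f x / g x) \<longlongrightarrow> L) (at_right 0))"
    using not_tendsto_if_frequently_two_values[of lo hi] \<open>lo < 1\<close> \<open>1 < hi\<close> by force
qed

lemma exp_a_half_parameters:
  assumes "\<sigma> < -2" "exp_a \<sigma> p = 1/2"
  shows "1 < p" "\<sigma> + 2 = 1/2 * (1 - p)"
    and "0 < const_a \<sigma> p" "const_a \<sigma> p powr (p - 1) = 1/2 * (1 - 1/2)"
proof -
  have "p \<noteq> 1" using assms(2) by (auto simp: exp_a_def)
  then show exponent: "\<sigma> + 2 = 1/2 * (1 - p)"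
    using assms(2) by (simp add: exp_a_def field_simps)
  then show "1 < p" using assms(1) by simp
  then show "0 < const_a \<sigma> p" "const_a \<sigma> p powr (p - 1) = 1/2 * (1 - 1/2)"
    by (simp_all add: const_a_def assms(2) powr_powr)
qed

theorem theorem5p9:
  fixes \<sigma> p :: real
  assumes "\<sigma> < -2" and "p > -1 - \<sigma>" and "exp_a \<sigma> p = 1/2"
  shows "\<exists>u u' u'' :: real \<Rightarrow> real.
           (\<forall>x>0. u x > 0) \<and>
           (\<forall>x>0. (u has_real_derivative u' x) (at x)) \<and>
           (\<forall>x>0. (u' has_real_derivative u'' x) (at x)) \<and>
           continuous_on {0<..} u'' \<and>
           (\<forall>x>0. u'' x + x powr \<sigma> * (u x) powr p = 0) \<and>
           sign_changes_inf_near_0 (\<lambda>x. u x - u_sing \<sigma> p x) \<and>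
           bounded ((\<lambda>x. u x / u_sing \<sigma> p x) ` {0<..}) \<and>
           \<not> (\<exists>L. ((\<lambda>x. u x / u_sing \<sigma> p x) \<longlongrightarrow> L) (at_right 0))"
proof -
  (* The hypothesis p > -1 - sigma follows from the other two. *)
  note params = exp_a_half_parameters[OF assms(1,3)]
  define c where "c = const_a \<sigma> p"
  obtain \<beta> w y where "1 < \<beta>" and w: "\<And>t. (w has_real_derivative y t) (at t)"
    and y: "\<And>t. (y has_real_derivative emden_force p (w t)) (at t)"
    and range: "\<And>t. 1/2 \<le> w t \<and> w t \<le> \<beta>"
    and lo: "frequently (\<lambda>t. w t = 1/2) at_bot" and hi: "frequently (\<lambda>t. w t = \<beta>) at_bot"
    using emden_periodic_solution[OF params(1)] by blast
  define u where "u = (\<lambda>x. c * x powr (1/2) * w (ln x))"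
  have w_pos: "0 < w t" for t using range[of t] by linarith
  obtain u' u'' where "\<forall>x>0. (u has_real_derivative u' x) (at x)"
    "\<forall>x>0. (u' has_real_derivative u'' x) (at x)" "continuous_on {0<..} u''"
    "\<forall>x>0. u'' x + x powr \<sigma> * (u x) powr p = 0"
    using emden_fowler_transform[OF params(2) params(3,4)[folded c_def] w_pos w] y
    unfolding u_def by (auto simp: emden_force_def)
  moreover have "\<forall>x>0. u x > 0" using params(3) w_pos by (simp add: u_def c_def)
  moreover have "u x = u_sing \<sigma> p x * w (ln x)" "0 < u_sing \<sigma> p x" if "0 < x" for x
    using params(3) that by (simp_all add: u_def c_def u_sing_def assms(3))
  note oscillation = log_oscillating_ratio[of u "u_sing \<sigma> p" w, OF this range _ \<open>1 < \<beta>\<close> lo hi]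
  ultimately show ?thesis
    by (intro exI[of _ u] exI[of _ u'] exI[of _ u''] conjI oscillation) simp_all
qed

end
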